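(* Let $G$ be the infinite king grid. The code $C=\{(x,y)\in\mathbb{Z}^2\mid x-y\equiv 0\pmod 3\}$ is self-locating-dominating in $G$ and its density is $1/3$.
   Context: The infinite king grid $G=(V,E)$ has $V=\mathbb{Z}^2$, and distinct vertices $(u_1,u_2)$, $(v_1,v_2)$ are adjacent iff $|u_1-v_1|\le1$ and $|u_2-v_2|\le1$. Let $V_n=\{(x,y)\mid |x|\le n,|y|\le n\}$; the density of a code $C\subseteq V$ is $D(C)=\limsup_{n\to\infty}|C\cap V_n|/|V_n|$. $N[v]$ is the closed neighbourhood of $v$, and for a code $C$, $I(C;v)=N[v]\cap C$. A code $C$ is self-locating-dominating if for every $u\in V\setminus C$, $I(C;u)\ne\emptyset$ and $\bigcap_{c\in I(C;u)}N[c]=\{u\}$. *)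

theory Defs
  imports "HOL-Library.Liminf_Limsup" "HOL-Library.Extended_Real"
begin

type_synonym vertex = "int \<times> int"

definition king_adj :: "vertex \<Rightarrow> vertex \<Rightarrow> bool" where
  "king_adj u v \<longleftrightarrow> u \<noteq> v \<and> \<bar>fst u - fst v\<bar> \<le> 1 \<and> \<bar>snd u - snd v\<bar> \<le> 1"

definition closed_nbhd :: "vertex \<Rightarrow> vertex set" where
  "closed_nbhd v = {v} \<union> {u. king_adj v u}"

definition I_set :: "vertex set \<Rightarrow> vertex \<Rightarrow> vertex set" where
  "I_set C v = closed_nbhd v \<inter> C"

definition self_locating_dominating :: "vertex set \<Rightarrow> bool" where
  "self_locating_dominating C \<longleftrightarrow>
     (\<forall>u. u \<notin> C \<longrightarrow> I_set C u \<noteq> {} \<and> (\<Inter>c\<in>I_set C u. closed_nbhd c) = {u})"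

definition V_box :: "nat \<Rightarrow> vertex set" where
  "V_box n = {(x, y). \<bar>x\<bar> \<le> int n \<and> \<bar>y\<bar> \<le> int n}"

definition density :: "vertex set \<Rightarrow> ereal" where
  "density C = limsup (\<lambda>n. ereal (real (card (C \<inter> V_box n)) / real (card (V_box n))))"

end

theory Submission
  imports Defs
begin

(* A vertex (a, b) outside the code has a - b congruent to s = 1 or s = -1 mod 3, and its
   codeword neighbours are exactly (a, b + s), (a - s, b) and (a + s, b - s); the three 3x3
   squares centred at them share only the centre (a, b).
   For the density, every column of V_n meets the code in a residue class mod 3 of an interval
   of length 2n + 1, i.e. in (2n + 1)/3 + O(1) vertices, and the total error O(n) is negligible
   against |V_n| = (2n + 1)^2. *)

lemma mem_closed_nbhd_iff:
  "(x, y) \<in> closed_nbhd (a, b) \<longleftrightarrow> \<bar>x - a\<bar> \<le> 1 \<and> \<bar>y - b\<bar> \<le> 1"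
  unfolding closed_nbhd_def king_adj_def by auto

definition diagonal_code :: "vertex set" where
  "diagonal_code = {(x, y). (x - y) mod 3 = 0}"

lemma I_set_diagonal_code:
  assumes s: "s = 1 \<or> s = -1" and res: "(a - b) mod 3 = s mod 3"
  shows "I_set diagonal_code (a, b) = {(a, b + s), (a - s, b), (a + s, b - s)}"
proof (rule set_eqI)
  fix p :: vertex
  obtain x y where p: "p = (x, y)" by force
  from s show "p \<in> I_set diagonal_code (a, b) \<longleftrightarrow> p \<in> {(a, b + s), (a - s, b), (a + s, b - s)}"
    using res
    by (elim disjE)
      (simp_all add: I_set_def diagonal_code_def p mem_closed_nbhd_iff abs_le_iff; presburger)+
qed

lemma Inter_closed_nbhd_triple:
  assumes "s = 1 \<or> s = -1"
  shows "closed_nbhd (a, b + s) \<inter> closed_nbhd (a - s, b) \<inter> closed_nbhd (a + s, b - s) = {(a, b)}"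
  using assms by (auto simp: mem_closed_nbhd_iff)

lemma self_locating_dominating_diagonal_code: "self_locating_dominating diagonal_code"
  unfolding self_locating_dominating_def
proof (intro allI impI)
  fix u :: vertex
  assume u: "u \<notin> diagonal_code"
  obtain a b where ab: "u = (a, b)"
    by force
  obtain s :: int where s: "s = 1 \<or> s = -1" and res: "(a - b) mod 3 = s mod 3"
  proof -
    have "(a - b) mod 3 = 1 \<or> (a - b) mod 3 = 2"
      using u ab by (auto simp: diagonal_code_def)
    then show thesis
      using that[of 1] that[of "-1"] by auto
  qed
  show "I_set diagonal_code u \<noteq> {} \<and> (\<Inter>c\<in>I_set diagonal_code u. closed_nbhd c) = {u}"
    using Inter_closed_nbhd_triple[OF s, of a b]
    by (simp add: ab I_set_diagonal_code[OF s res] Int_assoc)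
qed

lemma residue_class_in_interval_eq_image:
  fixes a b r m :: int
  assumes "0 < m"
  shows "{y \<in> {a..b}. y mod m = r mod m}
    = (\<lambda>k. r + m * k) ` {\<lceil>of_int (a - r) / (of_int m :: real)\<rceil>..\<lfloor>of_int (b - r) / (of_int m :: real)\<rfloor>}"
proof -
  have in_range_iff: "a \<le> r + m * k \<and> r + m * k \<le> b
      \<longleftrightarrow> \<lceil>of_int (a - r) / (of_int m :: real)\<rceil> \<le> k \<and> k \<le> \<lfloor>of_int (b - r) / (of_int m :: real)\<rfloor>" for k
  proof -
    have "a \<le> r + m * k \<longleftrightarrow> of_int (a - r) \<le> (of_int (m * k) :: real)"
      and "r + m * k \<le> b \<longleftrightarrow> of_int (m * k) \<le> (of_int (b - r) :: real)"
      by (simp_all only: of_int_le_iff) linarith+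
    then show ?thesis
      using assms by (simp add: ceiling_le_iff le_floor_iff pos_divide_le_eq pos_le_divide_eq mult.commute)
  qed
  have "{y \<in> {a..b}. y mod m = r mod m} = (\<lambda>k. r + m * k) ` {k. a \<le> r + m * k \<and> r + m * k \<le> b}"
    by (auto simp: mod_eq_dvd_iff dvd_def algebra_simps)
  also have "\<dots> = (\<lambda>k. r + m * k) ` {\<lceil>of_int (a - r) / (of_int m :: real)\<rceil>..\<lfloor>of_int (b - r) / (of_int m :: real)\<rfloor>}"
    using in_range_iff by auto
  finally show ?thesis .
qed

lemma card_residue_class_in_interval:
  fixes a b r m :: int
  assumes "0 < m" "a \<le> b"
  shows "\<bar>m * int (card {y \<in> {a..b}. y mod m = r mod m}) - (b - a + 1)\<bar> \<le> m"
proof -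
  define lo where "lo = \<lceil>of_int (a - r) / (of_int m :: real)\<rceil>"
  define hi where "hi = \<lfloor>of_int (b - r) / (of_int m :: real)\<rfloor>"
  have "card {y \<in> {a..b}. y mod m = r mod m} = card {lo..hi}"
    using assms unfolding residue_class_in_interval_eq_image[OF \<open>0 < m\<close>] lo_def hi_def
    by (simp add: card_image inj_on_def)
  then have card_eq: "int (card {y \<in> {a..b}. y mod m = r mod m}) = max 0 (hi - lo + 1)"
    by simp
  have "of_int (b - r) / of_int m - 1 < (of_int hi :: real)" "of_int hi \<le> of_int (b - r) / (of_int m :: real)"
    "of_int (a - r) / of_int m \<le> (of_int lo :: real)" "of_int lo < of_int (a - r) / (of_int m :: real) + 1"
    unfolding lo_def hi_def by linarith+
  then have "of_int (b - r - m) < (of_int (m * hi) :: real)" "of_int (m * hi) \<le> (of_int (b - r) :: real)"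
    "of_int (a - r) \<le> (of_int (m * lo) :: real)" "of_int (m * lo) < (of_int (a - r + m) :: real)"
    using assms by (simp_all add: field_simps)
  then have "b - r - m < m * hi" "m * hi \<le> b - r" "a - r \<le> m * lo" "m * lo < a - r + m"
    by (simp_all only: of_int_less_iff of_int_le_iff)
  then have "b - a - m < m * (hi - lo + 1)" "m * (hi - lo + 1) \<le> b - a + m"
    by (simp_all add: algebra_simps)
  moreover from this(1) have "0 \<le> hi - lo + 1"
    using assms mult_less_cancel_left_pos[of m "- 1" "hi - lo + 1"] by simp
  ultimately show ?thesis
    using card_eq by (simp add: abs_le_iff)
qed

lemma V_box_eq_Times: "V_box n = {-int n..int n} \<times> {-int n..int n}"
  unfolding V_box_def by auto

lemma card_V_box: "card (V_box n) = (2 * n + 1)\<^sup>2"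
proof -
  have "card {-int n..int n} = 2 * n + 1"
    by simp
  then show ?thesis
    by (simp add: V_box_eq_Times card_cartesian_product power2_eq_square)
qed

lemma card_diagonal_code_Int_V_box:
  "\<bar>3 * int (card (diagonal_code \<inter> V_box n)) - (2 * int n + 1)\<^sup>2\<bar> \<le> 3 * (2 * int n + 1)"
proof -
  define column where "column x = {y \<in> {-int n..int n}. y mod 3 = x mod 3}" for x :: int
  have "diagonal_code \<inter> V_box n = Sigma {-int n..int n} column"
  proof -
    have "(x - y) mod 3 = 0 \<longleftrightarrow> y mod 3 = x mod 3" for x y :: int
      by presburger
    then show ?thesis
      by (auto simp: diagonal_code_def V_box_eq_Times column_def)
  qed
  moreover have "finite (column x)" for x
    unfolding column_def by (rule finite_subset[of _ "{-int n..int n}"]) auto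
  ultimately have "int (card (diagonal_code \<inter> V_box n)) = (\<Sum>x\<in>{-int n..int n}. int (card (column x)))"
    by simp
  then have "3 * int (card (diagonal_code \<inter> V_box n)) - (2 * int n + 1)\<^sup>2
      = (\<Sum>x\<in>{-int n..int n}. 3 * int (card (column x)) - (2 * int n + 1))"
    by (simp add: sum_subtractf sum_distrib_left power2_eq_square)
  also have "\<bar>\<dots>\<bar> \<le> (\<Sum>x\<in>{-int n..int n}. \<bar>3 * int (card (column x)) - (2 * int n + 1)\<bar>)"
    by (rule sum_abs)
  also have "\<dots> \<le> (\<Sum>x\<in>{-int n..int n}. 3)"
    using card_residue_class_in_interval[of 3 "- int n" "int n"]
    by (intro sum_mono) (simp add: column_def)
  finally show ?thesis
    by simp
qed

lemma density_eqI:
  assumes close: "\<And>n. \<bar>real (card (C \<inter> V_box n)) - c * real (card (V_box n))\<bar> \<le> K * real (2 * n + 1)"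
  shows "density C = ereal c"
proof -
  define g where "g n = real (card (C \<inter> V_box n)) / real (card (V_box n))" for n
  have "0 \<le> K"
    using close[of 0] abs_ge_zero[of "real (card (C \<inter> V_box 0)) - c * real (card (V_box 0))"] by simp
  have g_close: "\<bar>g n - c\<bar> \<le> inverse (real (Suc n)) * K" for n
  proof -
    define s where "s = real (2 * n + 1)"
    have "0 < s" "real (Suc n) \<le> s"
      by (simp_all add: s_def)
    have "\<bar>g n - c\<bar> = \<bar>real (card (C \<inter> V_box n)) - c * real (card (V_box n))\<bar> / s\<^sup>2"
      using \<open>0 < s\<close> by (simp add: g_def card_V_box s_def field_simps)
    also have "\<dots> \<le> K * s / s\<^sup>2"
      using close[of n] by (simp add: s_def divide_right_mono)
    also have "\<dots> = K / s"
      using \<open>0 < s\<close> by (simp add: power2_eq_square)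
    also have "\<dots> \<le> inverse (real (Suc n)) * K"
      using \<open>0 \<le> K\<close> \<open>real (Suc n) \<le> s\<close>
      by (simp add: divide_inverse mult.commute mult_left_mono le_imp_inverse_le)
    finally show ?thesis .
  qed
  have "(\<lambda>n. g n - c) \<longlonglongrightarrow> 0"
    using g_close by (intro tendsto_0_le[OF LIMSEQ_inverse_real_of_nat, where K = K] always_eventually) simp
  then have "(\<lambda>n. ereal (g n)) \<longlonglongrightarrow> ereal c"
    by (rule tendsto_ereal[OF LIM_zero_cancel])
  then show ?thesis
    unfolding density_def g_def by (simp add: lim_imp_Limsup)
qed

theorem theorem12:
  defines "C \<equiv> {(x::int, y::int). (x - y) mod 3 = 0}"
  shows "self_locating_dominating C \<and> density C = ereal (1/3)"
proof -
  have "density diagonal_code = ereal (1/3)"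
  proof (rule density_eqI[where K = 1])
    fix n
    have "real_of_int \<bar>3 * int (card (diagonal_code \<inter> V_box n)) - (2 * int n + 1)\<^sup>2\<bar>
        \<le> real_of_int (3 * (2 * int n + 1))"
      using card_diagonal_code_Int_V_box[of n] by (simp only: of_int_le_iff)
    then show "\<bar>real (card (diagonal_code \<inter> V_box n)) - 1/3 * real (card (V_box n))\<bar> \<le> 1 * real (2 * n + 1)"
      by (simp add: card_V_box abs_le_iff add.commute)
  qed
  then show ?thesis
    using self_locating_dominating_diagonal_code by (simp add: C_def diagonal_code_def)
qed

end
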